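(* Let $E\subseteq\mathbb{R}^n$ be compact. Let $S,S'$ be weight sequences with $s_k^{1/k}\to\infty$, $(s'_k)^{1/k}\to\infty$, and suppose there is $\lambda\le1$ with $2\overline{\Gamma}_{s'}(t)\le\underline{\Gamma}_s(\lambda t)$ for all $t>0$. Then there is a constant $D_1>1$ (depending on $S,S'$, $n$) such that the following holds. Let $F=(F^\alpha)_\alpha$ be a jet on $E$ for which there are $C>0$, $\rho\ge1$ with $$|F^\alpha(a)|\le C\rho^{|\alpha|}S_{|\alpha|},\qquad |(R^k_aF)^\alpha(b)|\le C\rho^{k+1}|\alpha|!\,s_{k+1}|b-a|^{k+1-|\alpha|}$$ for all $\alpha\in\mathbb{N}^n$, $k\ge|\alpha|$, $a,b\in E$. Then for all $L\ge D_1\rho$, all $x\in\mathbb{R}^n\setminus E$ and all $\alpha\in\mathbb{N}^n$, $$|(T^{2\overline{\Gamma}_{s'}(Ld(x))}_{\hat x}F)^{(\alpha)}(x)|\le C(2L)^{|\alpha|+1}S_{|\alpha|},$$ and, if $|\alpha|<2\overline{\Gamma}_{s'}(Ld(x))$, $$|(T^{2\overline{\Gamma}_{s'}(Ld(x))}_{\hat x}F)^{(\alpha)}(x)-F^\alpha(\hat x)|\le C(2L)^{|\alpha|+1}|\alpha|!\,s_{|\alpha|+1}\,d(x).$$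
   Context: A weight sequence is given by an increasing sequence $1=\sigma_0\le\sigma_1\le\cdots$ via $S_k=\sigma_0\cdots\sigma_k=k!\,s_k$, with $S_k^{1/k}\to\infty$; analogously $S'\leftrightarrow s'$. For a positive sequence $m$ with $m_0=1$, $m_k^{1/k}\to\infty$, $m_{k+1}/m_k\to\infty$: $h_m(t)=\inf_km_kt^k$, $\overline{\Gamma}_m(t)=\min\{k:h_m(t)=m_kt^k\}$, $\underline{\Gamma}_m(t)=\min\{k:m_{k+1}/m_k\ge1/t\}$ ($t>0$). A jet on $E$ is $F=(F^\alpha)_{\alpha\in\mathbb{N}^n}$, $F^\alpha\in C^0(E)$; $T^p_aF(x)=\sum_{|\alpha|\le p}\frac{(x-a)^\alpha}{\alpha!}F^\alpha(a)$; $(R^p_aF)^\alpha(x)=F^\alpha(x)-\sum_{|\beta|\le p-|\alpha|}\frac{(x-a)^\beta}{\beta!}F^{\alpha+\beta}(a)$. $d(x)=\operatorname{dist}(x,E)$ and $\hat x$ denotes any point of $E$ with $|x-\hat x|=d(x)$. *)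

theory Defs
  imports "HOL-Analysis.Analysis"
begin

definition Wseq :: "(nat \<Rightarrow> real) \<Rightarrow> nat \<Rightarrow> real" where
  "Wseq \<sigma> k = (\<Prod>i\<le>k. \<sigma> i)"

definition wseq :: "(nat \<Rightarrow> real) \<Rightarrow> nat \<Rightarrow> real" where
  "wseq \<sigma> k = Wseq \<sigma> k / fact k"

definition weight_sequence :: "(nat \<Rightarrow> real) \<Rightarrow> bool" where
  "weight_sequence \<sigma> \<longleftrightarrow> \<sigma> 0 = 1 \<and> incseq \<sigma> \<and>
     filterlim (\<lambda>k. Wseq \<sigma> k powr (1 / real k)) at_top sequentially"

definition h_fun :: "(nat \<Rightarrow> real) \<Rightarrow> real \<Rightarrow> real" where
  "h_fun m t = (INF k. m k * t ^ k)"

definition Gamma_upper :: "(nat \<Rightarrow> real) \<Rightarrow> real \<Rightarrow> nat" where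
  "Gamma_upper m t = (LEAST k. h_fun m t = m k * t ^ k)"

definition Gamma_lower :: "(nat \<Rightarrow> real) \<Rightarrow> real \<Rightarrow> nat" where
  "Gamma_lower m t = (LEAST k. m (Suc k) / m k \<ge> 1 / t)"

definition mabs :: "('n::finite \<Rightarrow> nat) \<Rightarrow> nat" where
  "mabs \<alpha> = (\<Sum>i\<in>UNIV. \<alpha> i)"

definition mfact :: "('n::finite \<Rightarrow> nat) \<Rightarrow> real" where
  "mfact \<alpha> = (\<Prod>i\<in>UNIV. fact (\<alpha> i))"

definition mpow :: "real^'n::finite \<Rightarrow> ('n \<Rightarrow> nat) \<Rightarrow> real" where
  "mpow v \<alpha> = (\<Prod>i\<in>UNIV. (v $ i) ^ (\<alpha> i))"

definition is_jet :: "(real^'n::finite) set \<Rightarrow> (('n \<Rightarrow> nat) \<Rightarrow> real^'n \<Rightarrow> real) \<Rightarrow> bool" where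
  "is_jet E F \<longleftrightarrow> (\<forall>\<alpha>. continuous_on E (F \<alpha>))"

text \<open>alpha-th partial derivative at x of the Taylor polynomial T^p_a F, written out:
  it is the sum over |beta| <= p - |alpha| of (x-a)^beta/beta! * F^(alpha+beta)(a)
  when |alpha| <= p, and 0 when |alpha| > p.\<close>

definition taylor_deriv :: "nat \<Rightarrow> real^'n::finite \<Rightarrow> (('n \<Rightarrow> nat) \<Rightarrow> real^'n \<Rightarrow> real)
    \<Rightarrow> ('n \<Rightarrow> nat) \<Rightarrow> real^'n \<Rightarrow> real" where
  "taylor_deriv p a F \<alpha> x =
     (if mabs \<alpha> \<le> p then
        (\<Sum>\<beta>\<in>{\<beta>. mabs \<beta> \<le> p - mabs \<alpha>}. mpow (x - a) \<beta> / mfact \<beta> * F (\<lambda>i. \<alpha> i + \<beta> i) a)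
      else 0)"

definition remainder :: "nat \<Rightarrow> real^'n::finite \<Rightarrow> (('n \<Rightarrow> nat) \<Rightarrow> real^'n \<Rightarrow> real)
    \<Rightarrow> ('n \<Rightarrow> nat) \<Rightarrow> real^'n \<Rightarrow> real" where
  "remainder p a F \<alpha> x =
     F \<alpha> x - (\<Sum>\<beta>\<in>{\<beta>. mabs \<beta> \<le> p - mabs \<alpha>}. mpow (x - a) \<beta> / mfact \<beta> * F (\<lambda>i. \<alpha> i + \<beta> i) a)"

end

theory Submission
  imports Defs "HOL-Library.FuncSet"
begin

text \<open>Every multi-index \<open>\<beta>\<close> in the Taylor sum has
  \<open>|\<alpha>| + |\<beta>| \<le> 2\<Gamma>\<^sub>s\<^sub>'(Ld) \<le> \<Gamma>\<^sub>s(\<lambda>Ld)\<close>, and below \<open>\<Gamma>\<^sub>s(t)\<close> the quotients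
  \<open>s\<^sub>k\<^sub>+\<^sub>1/s\<^sub>k\<close> are smaller than \<open>1/t\<close>, so \<open>s\<^sub>|\<^sub>\<alpha>\<^sub>|\<^sub>+\<^sub>|\<^sub>\<beta>\<^sub>|\<close> decays geometrically like
  \<open>(\<lambda>Ld)\<^sup>-\<^sup>|\<^sup>\<beta>\<^sup>|\<close>. Against the factor \<open>d\<^sup>|\<^sup>\<beta>\<^sup>|\<close> from \<open>(x - x\<^sub>h)\<^sup>\<beta>\<close> this leaves a
  geometric series in \<open>\<rho>/(\<lambda>L)\<close>, which is summable over all multi-indices once
  \<open>L \<ge> D\<^sub>1\<rho>\<close>. Dropping the term \<open>\<beta> = 0\<close> gains one factor \<open>d\<close>.\<close>

lemma fact_add_le: "fact (a + b) \<le> 2 ^ (a + b) * fact a * (fact b :: real)"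
proof -
  have "(fact (a + b) :: real) = fact a * fact b * real ((a + b) choose a)"
    using binomial_fact_lemma[of a "a + b"] by (metis add_diff_cancel_left' le_add1 of_nat_fact of_nat_mult)
  also have "\<dots> \<le> fact a * fact b * 2 ^ (a + b)"
    using binomial_le_pow2[of "a + b" a]
    by (intro mult_left_mono) (auto simp: of_nat_le_iff[symmetric])
  finally show ?thesis by (simp add: algebra_simps)
qed

lemma fact_sum_le:
  fixes \<beta> :: "'a \<Rightarrow> nat"
  assumes "finite A"
  shows "(fact (\<Sum>i\<in>A. \<beta> i) :: real) \<le> (2 ^ card A) ^ (\<Sum>i\<in>A. \<beta> i) * (\<Prod>i\<in>A. fact (\<beta> i))"
  using assms
proof (induction A rule: finite_induct)
  case empty
  then show ?case by simp
next
  case (insert i A)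
  let ?s = "\<Sum>i\<in>A. \<beta> i" and ?P = "(\<Prod>i\<in>A. fact (\<beta> i)) :: real"
  have "(fact (\<beta> i + ?s) :: real) \<le> 2 ^ (\<beta> i + ?s) * fact (\<beta> i) * fact ?s"
    by (rule fact_add_le)
  also have "\<dots> \<le> 2 ^ (\<beta> i + ?s) * fact (\<beta> i) * ((2 ^ card A) ^ ?s * ?P)"
    by (intro mult_left_mono insert.IH) auto
  also have "\<dots> \<le> 2 ^ (\<beta> i + ?s) * (2 ^ card A) ^ (\<beta> i + ?s) * (fact (\<beta> i) * ?P)"
    by (simp add: mult_ac mult_left_mono power_increasing prod_nonneg)
  also have "\<dots> = (2 ^ (card A + 1)) ^ (\<beta> i + ?s) * (fact (\<beta> i) * ?P)"
    by (simp add: power_mult_distrib)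
  finally show ?case
    using insert by simp
qed

lemma fact_mabs_le: "(fact (mabs \<beta>) :: real) \<le> (2 ^ CARD('n)) ^ mabs \<beta> * mfact (\<beta> :: 'n::finite \<Rightarrow> nat)"
  unfolding mabs_def mfact_def by (rule fact_sum_le) simp

lemma mfact_pos: "mfact \<beta> > 0"
  unfolding mfact_def by (auto intro: prod_pos)

lemma mabs_add: "mabs (\<lambda>i. \<alpha> i + \<beta> i) = mabs \<alpha> + mabs (\<beta> :: 'n::finite \<Rightarrow> nat)"
  unfolding mabs_def by (simp add: sum.distrib)

lemma mabs_eq_0_iff: "mabs (\<beta> :: 'n::finite \<Rightarrow> nat) = 0 \<longleftrightarrow> \<beta> = (\<lambda>_. 0)"
  unfolding mabs_def by (auto simp: fun_eq_iff)

lemma mabs_0 [simp]: "mabs (\<lambda>_::'n::finite. 0) = 0"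
  by (simp add: mabs_eq_0_iff)

lemma abs_mpow_le: "\<bar>mpow (v :: real^'n::finite) \<beta>\<bar> \<le> norm v ^ mabs \<beta>"
proof -
  have "\<bar>mpow v \<beta>\<bar> = (\<Prod>i\<in>UNIV. \<bar>v $ i\<bar> ^ \<beta> i)"
    unfolding mpow_def by (simp add: abs_prod power_abs)
  also have "\<dots> \<le> (\<Prod>i\<in>UNIV. norm v ^ \<beta> i)"
    by (intro prod_mono conjI power_mono) (auto simp: component_le_norm_cart)
  also have "\<dots> = norm v ^ mabs \<beta>"
    unfolding mabs_def by (simp add: power_sum)
  finally show ?thesis .
qed

lemma mabs_le_subset_PiE: "{\<beta> :: 'n::finite \<Rightarrow> nat. mabs \<beta> \<le> N} \<subseteq> PiE UNIV (\<lambda>_. {..N})"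
proof
  fix \<beta> :: "'n \<Rightarrow> nat"
  assume "\<beta> \<in> {\<beta>. mabs \<beta> \<le> N}"
  then have "\<beta> i \<le> N" for i
    unfolding mabs_def using member_le_sum[of i UNIV \<beta>] by simp
  then show "\<beta> \<in> PiE UNIV (\<lambda>_. {..N})" by auto
qed

lemma finite_mabs_le: "finite {\<beta> :: 'n::finite \<Rightarrow> nat. mabs \<beta> \<le> N}"
  by (rule finite_subset[OF mabs_le_subset_PiE]) (simp add: finite_PiE)

lemma sum_power_le_2:
  fixes c :: real
  assumes "0 \<le> c" "c \<le> 1/2"
  shows "(\<Sum>b\<le>N. c ^ b) \<le> 2"
proof -
  have "(\<Sum>b\<le>N. c ^ b) = (\<Sum>b<Suc N. c ^ b)"
    by (simp add: lessThan_Suc_atMost)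
  also have "\<dots> \<le> (\<Sum>b. c ^ b)"
    using assms by (intro sum_le_suminf summable_geometric) auto
  also have "\<dots> = 1 / (1 - c)"
    using assms by (intro suminf_geometric) auto
  also have "\<dots> \<le> 2"
    using assms by (simp add: field_simps)
  finally show ?thesis .
qed

lemma sum_power_mabs_le:
  fixes c :: real
  assumes "0 \<le> c" "c \<le> 1/2"
  shows "(\<Sum>\<beta>\<in>{\<beta> :: 'n::finite \<Rightarrow> nat. mabs \<beta> \<le> N}. c ^ mabs \<beta>) \<le> 2 ^ CARD('n)"
proof -
  have "(\<Sum>\<beta>\<in>{\<beta> :: 'n \<Rightarrow> nat. mabs \<beta> \<le> N}. c ^ mabs \<beta>)
      \<le> (\<Sum>\<beta>\<in>PiE UNIV (\<lambda>_::'n. {..N}). c ^ mabs \<beta>)"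
    using assms by (intro sum_mono2[OF _ mabs_le_subset_PiE]) (auto simp: finite_PiE)
  also have "\<dots> = (\<Sum>\<beta>\<in>PiE UNIV (\<lambda>_::'n. {..N}). \<Prod>i\<in>UNIV. c ^ \<beta> i)"
    unfolding mabs_def by (simp add: power_sum)
  also have "\<dots> = (\<Prod>i\<in>(UNIV :: 'n set). \<Sum>b\<le>N. c ^ b)"
    by (rule prod_sum_PiE[symmetric]) auto
  also have "\<dots> \<le> (\<Prod>i\<in>(UNIV :: 'n set). 2)"
    using assms by (intro prod_mono conjI sum_power_le_2 sum_nonneg) auto
  finally show ?thesis by simp
qed

lemma weight_sequence_Wseq_ge_1:
  assumes "weight_sequence \<sigma>"
  shows "Wseq \<sigma> k \<ge> 1"
proof -
  have "\<sigma> i \<ge> 1" for i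
    using assms unfolding weight_sequence_def incseq_def by (metis le0)
  then show ?thesis
    unfolding Wseq_def by (intro prod_ge_1) auto
qed

lemma weight_sequence_wseq_pos: "weight_sequence \<sigma> \<Longrightarrow> wseq \<sigma> k > 0"
  unfolding wseq_def using weight_sequence_Wseq_ge_1 by (smt (verit) divide_pos_pos fact_gt_zero)

lemma Wseq_eq_fact_mult_wseq: "Wseq \<sigma> k = fact k * wseq \<sigma> k"
  unfolding wseq_def by simp

lemma le_Gamma_lower_ratio:
  fixes s :: "nat \<Rightarrow> real"
  assumes pos: "\<And>k. s k > 0" and "t > 0" and "i \<le> j" and "j \<le> Gamma_lower s t"
  shows "s j \<le> s i / t ^ (j - i)"
proof -
  have "s (i + n) \<le> s i / t ^ n" if "i + n \<le> Gamma_lower s t" for n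
    using that
  proof (induction n)
    case 0
    then show ?case by simp
  next
    case (Suc n)
    then have "\<not> s (Suc (i + n)) / s (i + n) \<ge> 1 / t"
      unfolding Gamma_lower_def by (intro not_less_Least) simp
    then have "s (Suc (i + n)) < s (i + n) / t"
      using pos[of "i + n"] \<open>t > 0\<close> by (simp add: field_simps)
    also have "\<dots> \<le> s i / t ^ n / t"
      using Suc \<open>t > 0\<close> by (intro divide_right_mono) auto
    finally show ?case by (simp add: field_simps)
  qed
  from this[of "j - i"] show ?thesis
    using assms by simp
qed

lemma abs_taylor_term_le:
  fixes v :: "real^'n::finite" and w :: "nat \<Rightarrow> real"
  assumes X: "\<bar>X\<bar> \<le> C * \<rho> ^ (a + mabs \<beta>) * (fact (a + mabs \<beta>) * w (a + mabs \<beta>))"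
    and w: "w (a + mabs \<beta>) > 0" and v: "norm v \<le> d" and "C \<ge> 0" "\<rho> \<ge> 0"
  shows "\<bar>mpow v \<beta> / mfact \<beta> * X\<bar>
    \<le> C * (2 * \<rho>) ^ a * fact a * (2 * 2 ^ CARD('n) * \<rho> * d) ^ mabs \<beta> * w (a + mabs \<beta>)"
proof -
  define j where "j = mabs \<beta>"
  define K :: real where "K = 2 ^ CARD('n)"
  have "d \<ge> 0"
    using v norm_ge_zero order_trans by blast
  have v': "\<bar>mpow v \<beta>\<bar> \<le> d ^ j"
    unfolding j_def using abs_mpow_le[of v \<beta>] power_mono[OF v norm_ge_zero, of "mabs \<beta>"] by linarith
  have "fact (a + j) \<le> 2 ^ (a + j) * fact a * (fact j :: real)"
    by (rule fact_add_le)
  also have "\<dots> \<le> 2 ^ (a + j) * fact a * (K ^ j * mfact \<beta>)"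
    using fact_mabs_le[of \<beta>] unfolding j_def K_def by (intro mult_left_mono) auto
  finally have "fact (a + j) * w (a + j) \<le> 2 ^ (a + j) * fact a * (K ^ j * mfact \<beta>) * w (a + j)"
    using w unfolding j_def by (intro mult_right_mono) auto
  then have "C * \<rho> ^ (a + j) * (fact (a + j) * w (a + j))
      \<le> C * \<rho> ^ (a + j) * (2 ^ (a + j) * fact a * (K ^ j * mfact \<beta>) * w (a + j))"
    using \<open>C \<ge> 0\<close> \<open>\<rho> \<ge> 0\<close> by (intro mult_left_mono) auto
  then have X': "\<bar>X\<bar> \<le> C * \<rho> ^ (a + j) * (2 ^ (a + j) * fact a * (K ^ j * mfact \<beta>) * w (a + j))"
    using X unfolding j_def by linarith
  have "\<bar>mpow v \<beta> / mfact \<beta> * X\<bar> = \<bar>mpow v \<beta>\<bar> / mfact \<beta> * \<bar>X\<bar>"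
    using mfact_pos[of \<beta>] by (simp add: abs_mult)
  also have "\<dots> \<le> d ^ j / mfact \<beta> * (C * \<rho> ^ (a + j) * (2 ^ (a + j) * fact a * (K ^ j * mfact \<beta>) * w (a + j)))"
    using v' X' mfact_pos[of \<beta>] \<open>d \<ge> 0\<close> by (intro mult_mono divide_right_mono) auto
  also have "\<dots> = C * (2 * \<rho>) ^ a * fact a * (2 * K * \<rho> * d) ^ j * w (a + j)"
    using mfact_pos[of \<beta>] by (simp add: power_add power_mult_distrib field_simps)
  finally show ?thesis
    unfolding j_def K_def .
qed

lemma sum_taylor_terms_le:
  fixes F :: "('n::finite \<Rightarrow> nat) \<Rightarrow> real^'n \<Rightarrow> real" and \<alpha> :: "'n \<Rightarrow> nat"
  defines "K \<equiv> 2 ^ CARD('n) :: real"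
  assumes \<sigma>: "weight_sequence \<sigma>"
    and F: "\<And>\<gamma>. \<bar>F \<gamma> y\<bar> \<le> C * \<rho> ^ mabs \<gamma> * Wseq \<sigma> (mabs \<gamma>)"
    and "C \<ge> 0" "\<rho> \<ge> 0" and xy: "norm (x - y) \<le> d"
    and "t > 0" and \<Gamma>: "mabs \<alpha> + N \<le> Gamma_lower (wseq \<sigma>) t" and small: "8 * K * \<rho> * d \<le> t"
  shows "(\<Sum>\<beta>\<in>{\<beta>. m \<le> mabs \<beta> \<and> mabs \<beta> \<le> N}. \<bar>mpow (x - y) \<beta> / mfact \<beta> * F (\<lambda>i. \<alpha> i + \<beta> i) y\<bar>)
    \<le> C * (2 * \<rho>) ^ mabs \<alpha> * fact (mabs \<alpha>) * wseq \<sigma> (mabs \<alpha> + m) * (8 * K * \<rho> * d) ^ m * K"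
proof -
  define a where "a = mabs \<alpha>"
  define c where "c = 2 * K * \<rho> * d"
  define Q where "Q = C * (2 * \<rho>) ^ a * fact a"
  define B where "B = {\<beta> :: 'n \<Rightarrow> nat. m \<le> mabs \<beta> \<and> mabs \<beta> \<le> N}"
  have "d \<ge> 0"
    using xy norm_ge_zero order_trans by blast
  then have "c \<ge> 0" "Q \<ge> 0"
    unfolding c_def Q_def K_def using \<open>C \<ge> 0\<close> \<open>\<rho> \<ge> 0\<close> by auto
  have "c / t \<le> 1/4"
    using small \<open>t > 0\<close> unfolding c_def by (simp add: field_simps)
  have w: "wseq \<sigma> k > 0" for k
    using \<sigma> by (rule weight_sequence_wseq_pos)
  have term_le: "\<bar>mpow (x - y) \<beta> / mfact \<beta> * F (\<lambda>i. \<alpha> i + \<beta> i) y\<bar>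
      \<le> Q * wseq \<sigma> (a + m) * (4 * c) ^ m * (1/4) ^ mabs \<beta>" if "\<beta> \<in> B" for \<beta>
  proof -
    define j where "j = mabs \<beta>"
    have "m \<le> j" "a + j \<le> Gamma_lower (wseq \<sigma>) t"
      using that \<Gamma> unfolding B_def j_def a_def by auto
    have "\<bar>mpow (x - y) \<beta> / mfact \<beta> * F (\<lambda>i. \<alpha> i + \<beta> i) y\<bar> \<le> Q * c ^ j * wseq \<sigma> (a + j)"
      unfolding Q_def c_def K_def j_def a_def
      using F[of "\<lambda>i. \<alpha> i + \<beta> i"] w \<open>C \<ge> 0\<close> \<open>\<rho> \<ge> 0\<close>
      by (intro abs_taylor_term_le[OF _ _ xy]) (auto simp: mabs_add Wseq_eq_fact_mult_wseq)
    also have "\<dots> \<le> Q * c ^ j * (wseq \<sigma> (a + m) / t ^ (j - m))"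
      using le_Gamma_lower_ratio[OF w \<open>t > 0\<close> _ \<open>a + j \<le> _\<close>, of "a + m"] \<open>m \<le> j\<close> \<open>Q \<ge> 0\<close> \<open>c \<ge> 0\<close>
      by (intro mult_left_mono) auto
    also have "\<dots> = Q * wseq \<sigma> (a + m) * c ^ m * (c / t) ^ (j - m)"
      using \<open>m \<le> j\<close> by (simp add: power_divide power_add[symmetric])
    also have "\<dots> \<le> Q * wseq \<sigma> (a + m) * c ^ m * (1/4) ^ (j - m)"
      using \<open>c / t \<le> 1/4\<close> \<open>t > 0\<close> \<open>c \<ge> 0\<close> \<open>Q \<ge> 0\<close> w[of "a + m"]
      by (intro mult_left_mono power_mono) auto
    also have "\<dots> = Q * wseq \<sigma> (a + m) * (4 * c) ^ m * (1/4) ^ j"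
      using \<open>m \<le> j\<close> by (simp add: power_mult_distrib power_diff field_simps)
    finally show ?thesis
      unfolding j_def .
  qed
  have "(\<Sum>\<beta>\<in>B. \<bar>mpow (x - y) \<beta> / mfact \<beta> * F (\<lambda>i. \<alpha> i + \<beta> i) y\<bar>)
      \<le> (\<Sum>\<beta>\<in>B. Q * wseq \<sigma> (a + m) * (4 * c) ^ m * (1/4) ^ mabs \<beta>)"
    by (rule sum_mono) (rule term_le)
  also have "\<dots> = Q * wseq \<sigma> (a + m) * (4 * c) ^ m * (\<Sum>\<beta>\<in>B. (1/4) ^ mabs \<beta>)"
    by (simp add: sum_distrib_left)
  also have "\<dots> \<le> Q * wseq \<sigma> (a + m) * (4 * c) ^ m * (\<Sum>\<beta>\<in>{\<beta> :: 'n \<Rightarrow> nat. mabs \<beta> \<le> N}. (1/4) ^ mabs \<beta>)"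
  proof -
    have "B \<subseteq> {\<beta>. mabs \<beta> \<le> N}"
      unfolding B_def by auto
    then have "(\<Sum>\<beta>\<in>B. (1/4::real) ^ mabs \<beta>) \<le> (\<Sum>\<beta>\<in>{\<beta> :: 'n \<Rightarrow> nat. mabs \<beta> \<le> N}. (1/4) ^ mabs \<beta>)"
      by (intro sum_mono2 finite_mabs_le) auto
    then show ?thesis
      using \<open>Q \<ge> 0\<close> \<open>c \<ge> 0\<close> w[of "a + m"] by (intro mult_left_mono) auto
  qed
  also have "\<dots> \<le> Q * wseq \<sigma> (a + m) * (4 * c) ^ m * K"
    unfolding K_def using \<open>Q \<ge> 0\<close> \<open>c \<ge> 0\<close> w[of "a + m"]
    by (intro mult_left_mono sum_power_mabs_le) auto
  finally show ?thesis
    unfolding B_def Q_def c_def a_def by (simp add: mult_ac)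
qed

lemma two_le_two_power_card: "(2::real) \<le> 2 ^ CARD('n::finite)"
  using power_increasing[of 1 "CARD('n)" "2::real"] by simp

lemma scale_bounds:
  fixes K \<rho> lam L :: real
  assumes "K \<ge> 2" "\<rho> \<ge> 1" "0 < lam" "lam \<le> 1" and L: "8 * K\<^sup>2 * \<rho> \<le> lam * L"
  shows "\<rho> \<le> L" and "K \<le> 2 * L" and "8 * K\<^sup>2 * \<rho> \<le> 2 * L" and "8 * K * \<rho> \<le> lam * L"
proof -
  have "K \<le> K\<^sup>2"
    using \<open>K \<ge> 2\<close> by (simp add: power2_eq_square)
  then have "8 * K * \<rho> \<le> 8 * K\<^sup>2 * \<rho>" "\<rho> \<le> 8 * K\<^sup>2 * \<rho>" "K \<le> 8 * K\<^sup>2 * \<rho>"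
    using \<open>\<rho> \<ge> 1\<close> \<open>K \<ge> 2\<close> mult_right_mono[of 1 "8 * K\<^sup>2" \<rho>] mult_mono[of K "8 * K\<^sup>2" 1 \<rho>]
    by auto
  then have "0 < lam * L"
    using L \<open>\<rho> \<ge> 1\<close> by linarith
  then have "lam * L \<le> L"
    using \<open>0 < lam\<close> \<open>lam \<le> 1\<close> by (simp add: zero_less_mult_iff)
  then show "\<rho> \<le> L" "K \<le> 2 * L" "8 * K\<^sup>2 * \<rho> \<le> 2 * L" "8 * K * \<rho> \<le> lam * L"
    using L \<open>8 * K * \<rho> \<le> _\<close> \<open>\<rho> \<le> _\<close> \<open>K \<le> 8 * K\<^sup>2 * \<rho>\<close> \<open>\<rho> \<ge> 1\<close> by linarith+
qed

lemma abs_taylor_deriv_nearest_point_le: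
  fixes F :: "('n::finite \<Rightarrow> nat) \<Rightarrow> real^'n \<Rightarrow> real" and \<alpha> :: "'n \<Rightarrow> nat"
  assumes \<sigma>: "weight_sequence \<sigma>"
    and F: "\<And>\<gamma>. \<bar>F \<gamma> y\<bar> \<le> C * \<rho> ^ mabs \<gamma> * Wseq \<sigma> (mabs \<gamma>)"
    and "C \<ge> 0" "\<rho> \<ge> 1" "0 < lam" "lam \<le> 1" and L: "8 * (2 ^ CARD('n))\<^sup>2 * \<rho> \<le> lam * L"
    and xy: "norm (x - y) \<le> d" and "d > 0"
    and p: "p \<le> Gamma_lower (wseq \<sigma>) (lam * (L * d))"
  shows "\<bar>taylor_deriv p y F \<alpha> x\<bar> \<le> C * (2 * L) ^ (mabs \<alpha> + 1) * Wseq \<sigma> (mabs \<alpha>)"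
proof -
  define K :: real where "K = 2 ^ CARD('n)"
  define a where "a = mabs \<alpha>"
  define T where "T \<beta> = mpow (x - y) \<beta> / mfact \<beta> * F (\<lambda>i. \<alpha> i + \<beta> i) y" for \<beta>
  note K = scale_bounds[OF two_le_two_power_card \<open>\<rho> \<ge> 1\<close> \<open>0 < lam\<close> \<open>lam \<le> 1\<close> L, folded K_def]
  have small: "8 * 2 ^ CARD('n) * \<rho> * d \<le> lam * (L * d)"
    using mult_right_mono[OF K(4), of d] \<open>d > 0\<close> unfolding K_def by (simp add: mult_ac)
  have "0 < lam * (L * d)"
    using \<open>0 < lam\<close> \<open>d > 0\<close> \<open>\<rho> \<ge> 1\<close> K(1) by simp
  show ?thesis
  proof (cases "a \<le> p")
    case True
    have "taylor_deriv p y F \<alpha> x = sum T {\<beta>. mabs \<beta> \<le> p - a}"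
      using True unfolding taylor_deriv_def T_def a_def by simp
    then have "\<bar>taylor_deriv p y F \<alpha> x\<bar> \<le> (\<Sum>\<beta>\<in>{\<beta>. 0 \<le> mabs \<beta> \<and> mabs \<beta> \<le> p - a}. \<bar>T \<beta>\<bar>)"
      using sum_abs[of T] by simp
    also have "\<dots> \<le> C * ((2 * \<rho>) ^ a * K) * Wseq \<sigma> a"
      using sum_taylor_terms_le[where F = F and y = y and m = 0 and \<alpha> = \<alpha> and N = "p - a",
          OF \<sigma> F \<open>C \<ge> 0\<close> _ xy \<open>0 < lam * (L * d)\<close> _ small] \<open>\<rho> \<ge> 1\<close> p True
      unfolding T_def a_def K_def by (simp add: Wseq_eq_fact_mult_wseq mult_ac)
    also have "\<dots> \<le> C * ((2 * L) ^ a * (2 * L)) * Wseq \<sigma> a"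
      using \<open>C \<ge> 0\<close> \<open>\<rho> \<ge> 1\<close> K(1,2) weight_sequence_Wseq_ge_1[OF \<sigma>, of a] unfolding K_def
      by (intro mult_right_mono mult_left_mono mult_mono power_mono) auto
    finally show ?thesis
      unfolding a_def by (simp add: mult_ac)
  next
    case False
    have "0 \<le> Wseq \<sigma> (mabs \<alpha>)" "0 \<le> L"
      using weight_sequence_Wseq_ge_1[OF \<sigma>] K(1) \<open>\<rho> \<ge> 1\<close> by (smt (verit))+
    with False show ?thesis
      using \<open>C \<ge> 0\<close> unfolding taylor_deriv_def a_def by simp
  qed
qed

lemma abs_taylor_deriv_diff_nearest_point_le:
  fixes F :: "('n::finite \<Rightarrow> nat) \<Rightarrow> real^'n \<Rightarrow> real" and \<alpha> :: "'n \<Rightarrow> nat"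
  assumes \<sigma>: "weight_sequence \<sigma>"
    and F: "\<And>\<gamma>. \<bar>F \<gamma> y\<bar> \<le> C * \<rho> ^ mabs \<gamma> * Wseq \<sigma> (mabs \<gamma>)"
    and "C \<ge> 0" "\<rho> \<ge> 1" "0 < lam" "lam \<le> 1" and L: "8 * (2 ^ CARD('n))\<^sup>2 * \<rho> \<le> lam * L"
    and xy: "norm (x - y) \<le> d" and "d > 0"
    and p: "p \<le> Gamma_lower (wseq \<sigma>) (lam * (L * d))" and "mabs \<alpha> < p"
  shows "\<bar>taylor_deriv p y F \<alpha> x - F \<alpha> y\<bar>
    \<le> C * (2 * L) ^ (mabs \<alpha> + 1) * fact (mabs \<alpha>) * wseq \<sigma> (mabs \<alpha> + 1) * d"
proof -
  define K :: real where "K = 2 ^ CARD('n)"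
  define a where "a = mabs \<alpha>"
  define T where "T \<beta> = mpow (x - y) \<beta> / mfact \<beta> * F (\<lambda>i. \<alpha> i + \<beta> i) y" for \<beta>
  define B where "B = {\<beta> :: 'n \<Rightarrow> nat. mabs \<beta> \<le> p - a}"
  note K = scale_bounds[OF two_le_two_power_card \<open>\<rho> \<ge> 1\<close> \<open>0 < lam\<close> \<open>lam \<le> 1\<close> L, folded K_def]
  have small: "8 * 2 ^ CARD('n) * \<rho> * d \<le> lam * (L * d)"
    using mult_right_mono[OF K(4), of d] \<open>d > 0\<close> unfolding K_def by (simp add: mult_ac)
  have "0 < lam * (L * d)"
    using \<open>0 < lam\<close> \<open>d > 0\<close> \<open>\<rho> \<ge> 1\<close> K(1) by simp
  have "B - {\<lambda>_. 0} = {\<beta> :: 'n \<Rightarrow> nat. 1 \<le> mabs \<beta> \<and> mabs \<beta> \<le> p - a}"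
    unfolding B_def using mabs_eq_0_iff by (force simp: Suc_le_eq)
  moreover have "taylor_deriv p y F \<alpha> x = sum T B"
    using \<open>mabs \<alpha> < p\<close> unfolding taylor_deriv_def B_def T_def a_def by simp
  moreover have "sum T B = T (\<lambda>_. 0) + sum T (B - {\<lambda>_. 0})"
    by (rule sum.remove) (auto simp: B_def finite_mabs_le)
  moreover have "T (\<lambda>_. 0) = F \<alpha> y"
    unfolding T_def mpow_def mfact_def by simp
  ultimately have "taylor_deriv p y F \<alpha> x - F \<alpha> y = (\<Sum>\<beta>\<in>{\<beta>. 1 \<le> mabs \<beta> \<and> mabs \<beta> \<le> p - a}. T \<beta>)"
    by simp
  then have "\<bar>taylor_deriv p y F \<alpha> x - F \<alpha> y\<bar> \<le> (\<Sum>\<beta>\<in>{\<beta>. 1 \<le> mabs \<beta> \<and> mabs \<beta> \<le> p - a}. \<bar>T \<beta>\<bar>)"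
    by (simp only:) (rule sum_abs)
  also have "\<dots> \<le> C * ((2 * \<rho>) ^ a * (8 * K\<^sup>2 * \<rho>)) * fact a * wseq \<sigma> (a + 1) * d"
    using sum_taylor_terms_le[where F = F and y = y and m = 1 and \<alpha> = \<alpha> and N = "p - a",
        OF \<sigma> F \<open>C \<ge> 0\<close> _ xy \<open>0 < lam * (L * d)\<close> _ small] \<open>\<rho> \<ge> 1\<close> p \<open>mabs \<alpha> < p\<close>
    unfolding T_def a_def K_def by (simp add: power2_eq_square mult_ac)
  also have "\<dots> \<le> C * ((2 * L) ^ a * (2 * L)) * fact a * wseq \<sigma> (a + 1) * d"
  proof -
    have "(2 * \<rho>) ^ a * (8 * K\<^sup>2 * \<rho>) \<le> (2 * L) ^ a * (2 * L)"
      using \<open>\<rho> \<ge> 1\<close> K(1,3) by (intro mult_mono[OF power_mono]) auto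
    then show ?thesis
      using \<open>C \<ge> 0\<close> \<open>d > 0\<close> weight_sequence_wseq_pos[OF \<sigma>, of "a + 1"]
      by (intro mult_right_mono mult_left_mono) auto
  qed
  finally show ?thesis
    unfolding a_def by (simp add: mult_ac)
qed

theorem lemma5p2:
  fixes \<sigma> \<sigma>' :: "nat \<Rightarrow> real"
  assumes "weight_sequence \<sigma>" and "weight_sequence \<sigma>'"
    and "filterlim (\<lambda>k. wseq \<sigma> k powr (1 / real k)) at_top sequentially"
    and "filterlim (\<lambda>k. wseq \<sigma>' k powr (1 / real k)) at_top sequentially"
    and "\<exists>lam>0. lam \<le> 1 \<and>
           (\<forall>t>0. 2 * Gamma_upper (wseq \<sigma>') t \<le> Gamma_lower (wseq \<sigma>) (lam * t))"
  shows "\<exists>D1>1. \<forall>(E :: (real^'n::finite) set) (F :: ('n \<Rightarrow> nat) \<Rightarrow> real^'n \<Rightarrow> real) C \<rho>.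
    compact E \<longrightarrow> is_jet E F \<longrightarrow> C > 0 \<longrightarrow> \<rho> \<ge> 1 \<longrightarrow>
    (\<forall>\<alpha>. \<forall>a\<in>E. \<bar>F \<alpha> a\<bar> \<le> C * \<rho> ^ mabs \<alpha> * Wseq \<sigma> (mabs \<alpha>)) \<longrightarrow>
    (\<forall>\<alpha> k. k \<ge> mabs \<alpha> \<longrightarrow> (\<forall>a\<in>E. \<forall>b\<in>E.
       \<bar>remainder k a F \<alpha> b\<bar> \<le> C * \<rho> ^ (k + 1) * fact (mabs \<alpha>) * wseq \<sigma> (k + 1)
                                  * norm (b - a) ^ (k + 1 - mabs \<alpha>))) \<longrightarrow>
    (\<forall>L \<ge> D1 * \<rho>. \<forall>x. x \<notin> E \<longrightarrow> (\<forall>xh\<in>E. dist x xh = infdist x E \<longrightarrow> (\<forall>\<alpha>.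
       (let p = 2 * Gamma_upper (wseq \<sigma>') (L * infdist x E) in
         \<bar>taylor_deriv p xh F \<alpha> x\<bar> \<le> C * (2 * L) ^ (mabs \<alpha> + 1) * Wseq \<sigma> (mabs \<alpha>) \<and>
         (mabs \<alpha> < p \<longrightarrow>
           \<bar>taylor_deriv p xh F \<alpha> x - F \<alpha> xh\<bar>
             \<le> C * (2 * L) ^ (mabs \<alpha> + 1) * fact (mabs \<alpha>) * wseq \<sigma> (mabs \<alpha> + 1) * infdist x E)))))"
proof -
  obtain lam where "0 < lam" "lam \<le> 1"
    and \<Gamma>: "\<And>t. t > 0 \<Longrightarrow> 2 * Gamma_upper (wseq \<sigma>') t \<le> Gamma_lower (wseq \<sigma>) (lam * t)"
    using assms(5) by blast
  define K :: real where "K = 2 ^ CARD('n)"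
  have "K \<ge> 2"
    unfolding K_def by (rule two_le_two_power_card)
  \<comment> \<open>\<open>K = 2\<^sup>n\<close> bounds both \<open>|\<beta>|!/\<beta>!\<close> and the sum over multi-indices; this \<open>D\<^sub>1\<close> makes
    the ratio \<open>2K\<rho>/(\<lambda>L)\<close> of the geometric series at most \<open>1/4\<close>.\<close>
  define D1 where "D1 = 8 * K\<^sup>2 / lam"
  have "D1 > 1"
    unfolding D1_def using \<open>K \<ge> 2\<close> \<open>0 < lam\<close> \<open>lam \<le> 1\<close> power_mono[OF \<open>K \<ge> 2\<close>, of 2]
    by (simp add: field_simps)
  show ?thesis
  proof (intro exI[of _ D1] conjI \<open>D1 > 1\<close> allI impI ballI)
    fix E :: "(real^'n) set" and F :: "('n \<Rightarrow> nat) \<Rightarrow> real^'n \<Rightarrow> real" and C \<rho> L x xh \<alpha>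
    assume "C > 0" "\<rho> \<ge> 1" and F: "\<forall>\<alpha>. \<forall>a\<in>E. \<bar>F \<alpha> a\<bar> \<le> C * \<rho> ^ mabs \<alpha> * Wseq \<sigma> (mabs \<alpha>)"
      and "L \<ge> D1 * \<rho>" "x \<notin> E" "xh \<in> E" "dist x xh = infdist x E"
    define d where "d = infdist x E"
    have "x \<noteq> xh"
      using \<open>x \<notin> E\<close> \<open>xh \<in> E\<close> by auto
    then have "d > 0"
      using \<open>dist x xh = infdist x E\<close> zero_less_dist_iff unfolding d_def by metis
    have "norm (x - xh) \<le> d"
      using \<open>dist x xh = infdist x E\<close> unfolding d_def by (simp add: dist_norm)
    have "8 * K\<^sup>2 * \<rho> \<le> lam * L"
      using \<open>L \<ge> D1 * \<rho>\<close> \<open>0 < lam\<close> unfolding D1_def by (simp add: field_simps)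
    moreover have "0 < L * d"
      using \<open>L \<ge> D1 * \<rho>\<close> \<open>D1 > 1\<close> \<open>\<rho> \<ge> 1\<close> \<open>d > 0\<close> by (smt (verit) mult_pos_pos)
    ultimately show "let p = 2 * Gamma_upper (wseq \<sigma>') (L * infdist x E) in
         \<bar>taylor_deriv p xh F \<alpha> x\<bar> \<le> C * (2 * L) ^ (mabs \<alpha> + 1) * Wseq \<sigma> (mabs \<alpha>) \<and>
         (mabs \<alpha> < p \<longrightarrow>
           \<bar>taylor_deriv p xh F \<alpha> x - F \<alpha> xh\<bar>
             \<le> C * (2 * L) ^ (mabs \<alpha> + 1) * fact (mabs \<alpha>) * wseq \<sigma> (mabs \<alpha> + 1) * infdist x E)"
      using abs_taylor_deriv_nearest_point_le[OF assms(1), of F xh C \<rho>]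
        abs_taylor_deriv_diff_nearest_point_le[OF assms(1), of F xh C \<rho>]
        F \<open>xh \<in> E\<close> \<open>C > 0\<close> \<open>\<rho> \<ge> 1\<close> \<open>0 < lam\<close> \<open>lam \<le> 1\<close> \<open>norm (x - xh) \<le> d\<close> \<open>d > 0\<close> \<Gamma>[of "L * d"]
      unfolding Let_def d_def K_def by auto
  qed
qed

end
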